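(* Assume $\omega=\{\omega_n\}_{n\ge1}$ is IID with law $\mathbb P$ satisfying the deviation inequality above the mean with constant $C$. Let $\lambda\ge0$, $h\ge0$, $N\in2\mathbb N$, $m\in\{0,2,\dots,N\}$, and let $\Omega_m$ be a set of walk paths with $\mathbf P(\Omega_m)>0$ such that $\mathcal N=m$ for every $S\in\Omega_m$. Then for every $u\ge0$, $$\mathbb P\Big(\textsc{f}_{N,\omega}(\Omega_m)-\mathbb E[\textsc{f}_{N,\omega}(\Omega_m)]\ge u\Big)\le C\exp\Big(-\frac{u^2N^2}{4C\lambda^2m}\Big).$$
   Context: $S=\{S_n\}_{n\ge0}$ is the simple symmetric random walk on $\mathbb Z$ started at $0$, law $\mathbf P$, expectation $\mathbf E$. Set $\mathrm{sign}(S_{2n}):=\mathrm{sign}(S_{2n-1})$ whenever $S_{2n}=0$, $\Delta_n=(1-\mathrm{sign}(S_n))/2$, $\mathcal N=\sum_{n=1}^N\Delta_n$. For a set of paths $\tilde\Omega$, $Z_{N,\omega}(\tilde\Omega)=\mathbf E\big[\exp\big(-2\lambda\sum_{n=1}^N(\omega_n+h)\Delta_n\big);\tilde\Omega\big]$ and $\textsc{f}_{N,\omega}(\tilde\Omega)=\frac1N\log Z_{N,\omega}(\tilde\Omega)$. Deviation inequality above the mean: there is $C>0$ such that for every $N$, every convex Lipschitz $g:\mathbb R^N\to\mathbb R$ with $g(\omega_1,\dots,\omega_N)\in L^1(\mathbb P)$ and every $t\ge0$, $\mathbb P(g(\omega)-\mathbb E[g(\omega)]\ge t)\le C\exp(-t^2/(C\|g\|_{\rm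 Lip}^2))$, with $\|g\|_{\rm Lip}$ the Lipschitz constant w.r.t. the Euclidean distance. *)

theory Defs
  imports "HOL-Probability.Probability"
begin

text \<open>Walk paths are encoded by their infinite step sequences X :: nat => int
  (X k is the (k+1)-th step, in {-1,1}); the law of the walk is the infinite product
  of fair coin flips.\<close>

definition walk_law :: "(nat \<Rightarrow> int) measure" where
  "walk_law = PiM UNIV (\<lambda>_. measure_pmf (pmf_of_set {-1::int, 1}))"

definition walk :: "(nat \<Rightarrow> int) \<Rightarrow> nat \<Rightarrow> int" where
  "walk X n = (\<Sum>k<n. X k)"

definition walk_sign :: "(nat \<Rightarrow> int) \<Rightarrow> nat \<Rightarrow> int" where
  "walk_sign X n = (if walk X n \<noteq> 0 then sgn (walk X n) else sgn (walk X (n - 1)))"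

definition Delta :: "(nat \<Rightarrow> int) \<Rightarrow> nat \<Rightarrow> real" where
  "Delta X n = (1 - real_of_int (walk_sign X n)) / 2"

definition calN :: "nat \<Rightarrow> (nat \<Rightarrow> int) \<Rightarrow> real" where
  "calN N X = (\<Sum>n=1..N. Delta X n)"

definition Zpart :: "real \<Rightarrow> real \<Rightarrow> nat \<Rightarrow> (nat \<Rightarrow> real) \<Rightarrow> (nat \<Rightarrow> int) set \<Rightarrow> real" where
  "Zpart lam h N \<omega> \<Omega>' =
     (\<integral>X. indicator \<Omega>' X * exp (- 2 * lam * (\<Sum>n=1..N. (\<omega> n + h) * Delta X n)) \<partial>walk_law)"

definition free_energy :: "real \<Rightarrow> real \<Rightarrow> nat \<Rightarrow> (nat \<Rightarrow> real) \<Rightarrow> (nat \<Rightarrow> int) set \<Rightarrow> real" where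
  "free_energy lam h N \<omega> \<Omega>' = ln (Zpart lam h N \<omega> \<Omega>') / real N"

text \<open>The disorder \<omega> = (\<omega>_n)_{n\<ge>1} is IID with law \<mu>: its joint law is the infinite
  product of \<mu> (coordinate 0 is unused).\<close>
definition disorder_law :: "real measure \<Rightarrow> (nat \<Rightarrow> real) measure" where
  "disorder_law \<mu> = PiM UNIV (\<lambda>_. \<mu>)"

definition depends_only_on :: "nat \<Rightarrow> ((nat \<Rightarrow> real) \<Rightarrow> real) \<Rightarrow> bool" where
  "depends_only_on N g \<longleftrightarrow> (\<forall>x y. (\<forall>i\<in>{1..N}. x i = y i) \<longrightarrow> g x = g y)"

definition convex_fun :: "((nat \<Rightarrow> real) \<Rightarrow> real) \<Rightarrow> bool" where
  "convex_fun g \<longleftrightarrow> (\<forall>x y t. 0 \<le> t \<and> t \<le> 1 \<longrightarrow>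
      g (\<lambda>i. t * x i + (1 - t) * y i) \<le> t * g x + (1 - t) * g y)"

definition lipschitz_N :: "nat \<Rightarrow> real \<Rightarrow> ((nat \<Rightarrow> real) \<Rightarrow> real) \<Rightarrow> bool" where
  "lipschitz_N N L g \<longleftrightarrow> (\<forall>x y. \<bar>g x - g y\<bar> \<le> L * sqrt (\<Sum>i=1..N. (x i - y i)^2))"

definition deviation_above_mean :: "real measure \<Rightarrow> real \<Rightarrow> bool" where
  "deviation_above_mean \<mu> C \<longleftrightarrow> C > 0 \<and>
     (\<forall>N g L t. depends_only_on N g \<and> convex_fun g \<and> L > 0 \<and> lipschitz_N N L g \<and>
        integrable (disorder_law \<mu>) g \<and> t \<ge> 0 \<longrightarrow>
        measure (disorder_law \<mu>) {\<omega> \<in> space (disorder_law \<mu>).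
            g \<omega> - (\<integral>\<omega>'. g \<omega>' \<partial>disorder_law \<mu>) \<ge> t}
          \<le> C * exp (- (t\<^sup>2) / (C * L\<^sup>2)))"

end

theory Submission imports Defs begin

text \<open>For fixed paths, \<omega> enters the energy linearly. Jensen's inequality for the Gibbs
  measure on \<Omega>m therefore gives the tangent inequality
  ln Z(x) \<ge> ln Z(y) - 2\<lambda> \<Sum>n (x n - y n) D(y, n), where D(y, n) is the Gibbs mean of
  \<Delta>n. So ln Z is convex, with gradient -2\<lambda> D(y, -). Since 0 \<le> D(y, n) \<le> 1 and
  \<Sum>n D(y, n) = m on \<Omega>m, this gradient has Euclidean norm at most 2\<lambda> sqrt m, so
  the free energy is convex and (2\<lambda> sqrt m / N)-Lipschitz in (\<omega>1, ..., \<omega>N). The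
  deviation inequality then gives the bound. When \<lambda> = 0 or m = 0 the Lipschitz
  constant is 0, so the free energy does not depend on \<omega>.\<close>

lemma ln_integral_exp_ge:
  fixes w f :: "'a \<Rightarrow> real"
  assumes w_nonneg: "\<And>x. 0 \<le> w x" and W_pos: "0 < (\<integral>x. w x \<partial>M)"
    and "integrable M w" "integrable M (\<lambda>x. w x * f x)" "integrable M (\<lambda>x. w x * exp (f x))"
  shows "ln (\<integral>x. w x \<partial>M) + (\<integral>x. w x * f x \<partial>M) / (\<integral>x. w x \<partial>M)
           \<le> ln (\<integral>x. w x * exp (f x) \<partial>M)"
proof -
  define W where "W = (\<integral>x. w x \<partial>M)"
  define c where "c = (\<integral>x. w x * f x \<partial>M) / W"
  have pointwise: "exp c * (w x + w x * f x - c * w x) \<le> w x * exp (f x)" for x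
  proof -
    have "exp c * (1 + (f x - c)) \<le> exp c * exp (f x - c)"
      using exp_ge_add_one_self[of "f x - c"] by simp
    then have "w x * (exp c * (1 + (f x - c))) \<le> w x * exp (f x)"
      by (simp add: exp_diff mult_left_mono w_nonneg)
    then show ?thesis by (simp add: algebra_simps)
  qed
  have "exp c * W = (\<integral>x. exp c * (w x + w x * f x - c * w x) \<partial>M)"
    using assms W_pos by (simp add: W_def c_def)
  also have "\<dots> \<le> (\<integral>x. w x * exp (f x) \<partial>M)"
    using pointwise assms by (intro integral_mono) auto
  finally have "ln (exp c * W) \<le> ln (\<integral>x. w x * exp (f x) \<partial>M)"
    using W_pos by (intro ln_mono) (simp_all add: W_def)
  then show ?thesis
    using W_pos by (simp add: ln_mult W_def c_def)
qed

lemma convex_fun_if_tangent: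
  fixes g :: "(nat \<Rightarrow> real) \<Rightarrow> real"
  assumes tangent: "\<And>x y. g y + (\<Sum>n=1..N. (x n - y n) * d y n) \<le> g x"
  shows "convex_fun g"
  unfolding convex_fun_def
proof (intro allI impI)
  fix x y :: "nat \<Rightarrow> real" and t :: real
  assume t: "0 \<le> t \<and> t \<le> 1"
  define p where "p = (\<lambda>i. t * x i + (1 - t) * y i)"
  have "t * (\<Sum>n=1..N. (x n - p n) * d p n) + (1 - t) * (\<Sum>n=1..N. (y n - p n) * d p n)
      = (\<Sum>n=1..N. (t * (x n - p n) + (1 - t) * (y n - p n)) * d p n)"
    by (simp add: sum_distrib_left sum.distrib[symmetric] algebra_simps)
  also have "\<dots> = 0"
    by (intro sum.neutral) (auto simp: p_def algebra_simps)
  finally have "g p = t * (g p + (\<Sum>n=1..N. (x n - p n) * d p n))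
                      + (1 - t) * (g p + (\<Sum>n=1..N. (y n - p n) * d p n))"
    by (simp add: algebra_simps)
  also have "\<dots> \<le> t * g x + (1 - t) * g y"
    using t tangent[of p x] tangent[of p y] by (intro add_mono mult_left_mono) auto
  finally show "g p \<le> t * g x + (1 - t) * g y" .
qed

lemma lipschitz_N_if_tangent:
  assumes tangent: "\<And>x y. g y + (\<Sum>n=1..N. (x n - y n) * d y n) \<le> g x"
    and gradient_bound: "\<And>y. L2_set (d y) {1..N} \<le> L"
  shows "lipschitz_N N L g"
proof -
  have one_sided: "g y - g x \<le> L * L2_set (\<lambda>n. x n - y n) {1..N}" for x y
  proof -
    have "g y - g x \<le> (\<Sum>n=1..N. \<bar>x n - y n\<bar> * \<bar>d y n\<bar>)"
      using tangent[of y x] sum_abs[of "\<lambda>n. (x n - y n) * d y n" "{1..N}"]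
      by (simp add: abs_mult)
    also have "\<dots> \<le> L2_set (\<lambda>n. x n - y n) {1..N} * L2_set (d y) {1..N}"
      by (rule L2_set_mult_ineq)
    also have "\<dots> \<le> L * L2_set (\<lambda>n. x n - y n) {1..N}"
      using gradient_bound[of y] by (metis mult.commute mult_right_mono L2_set_nonneg)
    finally show ?thesis .
  qed
  have symmetric: "L2_set (\<lambda>n. y n - x n) A = L2_set (\<lambda>n. x n - y n) A" for x y and A :: "nat set"
    unfolding L2_set_def by (simp add: power2_commute)
  show ?thesis
    unfolding lipschitz_N_def
  proof (intro allI)
    fix x y :: "nat \<Rightarrow> real"
    have "g x - g y \<le> L * L2_set (\<lambda>n. x n - y n) {1..N}"
      "g y - g x \<le> L * L2_set (\<lambda>n. x n - y n) {1..N}"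
      using one_sided[of x y] one_sided[of y x] symmetric[of y x] by simp_all
    then show "\<bar>g x - g y\<bar> \<le> L * sqrt (\<Sum>i=1..N. (x i - y i)\<^sup>2)"
      unfolding L2_set_def by linarith
  qed
qed

lemma prob_space_walk_law: "prob_space walk_law"
  unfolding walk_law_def by (intro prob_space_PiM) (simp add: prob_space_measure_pmf)

lemma prob_space_disorder_law: "prob_space \<mu> \<Longrightarrow> prob_space (disorder_law \<mu>)"
  unfolding disorder_law_def by (intro prob_space_PiM) auto

lemma borel_measurable_walk_step: "(\<lambda>X. f (X k)) \<in> borel_measurable walk_law"
proof -
  have "(\<lambda>X. X k) \<in> measurable walk_law (measure_pmf (pmf_of_set {-1::int, 1}))"
    unfolding walk_law_def by (rule measurable_component_singleton) simp
  then show ?thesis by (rule measurable_compose) simp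
qed

lemma borel_measurable_walk: "(\<lambda>X. real_of_int (walk X n)) \<in> borel_measurable walk_law"
  unfolding walk_def of_int_sum by (intro borel_measurable_sum borel_measurable_walk_step)

lemma borel_measurable_Delta: "(\<lambda>X. Delta X n) \<in> borel_measurable walk_law"
proof -
  have "(\<lambda>X. Delta X n) = (\<lambda>X. (1 - (if real_of_int (walk X n) \<noteq> 0
          then sgn (real_of_int (walk X n)) else sgn (real_of_int (walk X (n - 1))))) / 2)"
    by (simp add: fun_eq_iff Delta_def walk_sign_def sgn_if)
  also have "\<dots> \<in> borel_measurable walk_law"
    using borel_measurable_walk by measurable
  finally show ?thesis .
qed

lemma Delta_nonneg: "0 \<le> Delta X n" and Delta_le_1: "Delta X n \<le> 1"
  unfolding Delta_def walk_sign_def by (auto simp: sgn_if)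

lemma deviation_above_mean_constant_ge_1:
  assumes "prob_space \<mu>" and "deviation_above_mean \<mu> C"
  shows "1 \<le> C"
proof -
  interpret prob_space "disorder_law \<mu>"
    using assms(1) by (rule prob_space_disorder_law)
  have "measure (disorder_law \<mu>) {\<omega> \<in> space (disorder_law \<mu>).
            (\<lambda>_. 0::real) \<omega> - (\<integral>\<omega>'. (\<lambda>_. 0::real) \<omega>' \<partial>disorder_law \<mu>) \<ge> 0}
          \<le> C * exp (- (0\<^sup>2) / (C * 1\<^sup>2))"
    using assms(2) unfolding deviation_above_mean_def
    by (elim conjE allE[of _ 0] allE[of _ "\<lambda>_. 0"] allE[of _ 1] allE[of _ 0] mp)
       (simp add: depends_only_on_def convex_fun_def lipschitz_N_def)
  then show ?thesis by (simp add: prob_space)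
qed

lemma deviation_above_mean_lipschitz_nonneg:
  assumes "prob_space \<mu>" and dev: "deviation_above_mean \<mu> C"
    and "depends_only_on N g" "convex_fun g" "integrable (disorder_law \<mu>) g"
    and "L \<ge> 0" and lip: "lipschitz_N N L g" and "t \<ge> 0"
  shows "measure (disorder_law \<mu>)
           {\<omega> \<in> space (disorder_law \<mu>). g \<omega> - (\<integral>\<omega>'. g \<omega>' \<partial>disorder_law \<mu>) \<ge> t}
         \<le> (if L = 0 then (if t > 0 then 0 else C) else C * exp (- (t\<^sup>2) / (C * L\<^sup>2)))"
proof (cases "L = 0")
  case True
  interpret prob_space "disorder_law \<mu>"
    using assms(1) by (rule prob_space_disorder_law)
  obtain c where const: "\<And>\<omega>. g \<omega> = c"
    using lip True unfolding lipschitz_N_def by (metis abs_le_zero_iff eq_iff_diff_eq_0 mult_zero_left)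
  then have "(\<integral>\<omega>'. g \<omega>' \<partial>disorder_law \<mu>) = c"
    by (simp add: prob_space)
  then have "{\<omega> \<in> space (disorder_law \<mu>). g \<omega> - (\<integral>\<omega>'. g \<omega>' \<partial>disorder_law \<mu>) \<ge> t}
      = (if t > 0 then {} else space (disorder_law \<mu>))"
    using const \<open>t \<ge> 0\<close> by auto
  then show ?thesis
    using True deviation_above_mean_constant_ge_1[OF assms(1) dev] by (simp add: prob_space)
next
  case False
  then show ?thesis using assms unfolding deviation_above_mean_def by auto
qed

locale copolymer_on_paths =
  fixes lam h :: real and N m :: nat and \<Omega>m :: "(nat \<Rightarrow> int) set"
  assumes lam_nonneg: "lam \<ge> 0" and N_pos: "N > 0"
    and \<Omega>m_sets: "\<Omega>m \<in> sets walk_law" and \<Omega>m_pos: "measure walk_law \<Omega>m > 0"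
    and calN_\<Omega>m: "\<forall>X\<in>\<Omega>m. calN N X = real m"
begin

interpretation W: prob_space walk_law by (rule prob_space_walk_law)

abbreviation Z :: "(nat \<Rightarrow> real) \<Rightarrow> real" where
  "Z \<omega> \<equiv> Zpart lam h N \<omega> \<Omega>m"

definition energy :: "(nat \<Rightarrow> real) \<Rightarrow> (nat \<Rightarrow> int) \<Rightarrow> real" where
  "energy \<omega> X = - 2 * lam * (\<Sum>n=1..N. (\<omega> n + h) * Delta X n)"

definition weight :: "(nat \<Rightarrow> real) \<Rightarrow> (nat \<Rightarrow> int) \<Rightarrow> real" where
  "weight \<omega> X = indicator \<Omega>m X * exp (energy \<omega> X)"

definition gibbs_Delta :: "(nat \<Rightarrow> real) \<Rightarrow> nat \<Rightarrow> real" where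
  "gibbs_Delta \<omega> n = (\<integral>X. weight \<omega> X * Delta X n \<partial>walk_law) / Z \<omega>"

lemma Z_eq_integral_weight: "Z \<omega> = (\<integral>X. weight \<omega> X \<partial>walk_law)"
  unfolding Zpart_def weight_def energy_def by simp

lemma borel_measurable_energy: "energy \<omega> \<in> borel_measurable walk_law"
  unfolding energy_def using borel_measurable_Delta by measurable

lemma abs_energy_le: "\<bar>energy \<omega> X\<bar> \<le> 2 * lam * (\<Sum>n=1..N. \<bar>\<omega> n + h\<bar>)"
proof -
  have "\<bar>\<Sum>n=1..N. (\<omega> n + h) * Delta X n\<bar> \<le> (\<Sum>n=1..N. \<bar>\<omega> n + h\<bar>)"
    using Delta_nonneg[of X] Delta_le_1[of X]
    by (intro order_trans[OF sum_abs] sum_mono) (auto simp: abs_mult intro: mult_left_le)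
  then show ?thesis
    unfolding energy_def using lam_nonneg by (simp add: abs_mult mult_left_mono)
qed

lemma energy_diff:
  "energy x X - energy y X = - 2 * lam * (\<Sum>n=1..N. (x n - y n) * Delta X n)"
proof -
  have "(\<Sum>n=1..N. (x n + h) * Delta X n) - (\<Sum>n=1..N. (y n + h) * Delta X n)
      = (\<Sum>n=1..N. (x n - y n) * Delta X n)"
    by (simp add: sum_subtractf[symmetric] algebra_simps)
  then show ?thesis
    unfolding energy_def by (simp add: algebra_simps)
qed

lemma weight_nonneg: "0 \<le> weight \<omega> X"
  unfolding weight_def by simp

lemma integrable_weight_mult:
  assumes "f \<in> borel_measurable walk_law" and "\<And>X. \<bar>f X\<bar> \<le> K"
  shows "integrable walk_law (\<lambda>X. weight \<omega> X * f X)"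
proof (rule W.integrable_const_bound)
  let ?B = "2 * lam * (\<Sum>n=1..N. \<bar>\<omega> n + h\<bar>)"
  have "weight \<omega> X \<le> exp ?B" for X
    unfolding weight_def using abs_energy_le[of \<omega> X] by (auto simp: indicator_def)
  then show "AE X in walk_law. norm (weight \<omega> X * f X) \<le> exp ?B * K"
    using weight_nonneg assms(2) by (auto simp: abs_mult intro!: mult_mono)
  show "(\<lambda>X. weight \<omega> X * f X) \<in> borel_measurable walk_law"
    unfolding weight_def using borel_measurable_energy \<Omega>m_sets assms(1) by measurable
qed

lemma integrable_weight: "integrable walk_law (weight \<omega>)"
  using integrable_weight_mult[of "\<lambda>_. 1" 1 \<omega>] by simp

lemma integrable_weight_Delta: "integrable walk_law (\<lambda>X. weight \<omega> X * Delta X n)"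
  using integrable_weight_mult[of "\<lambda>X. Delta X n" 1] borel_measurable_Delta
    Delta_nonneg Delta_le_1 by (simp add: abs_le_iff)

lemma Z_pos: "Z \<omega> > 0"
proof -
  let ?B = "2 * lam * (\<Sum>n=1..N. \<bar>\<omega> n + h\<bar>)"
  have "0 < measure walk_law \<Omega>m * exp (- ?B)"
    using \<Omega>m_pos by simp
  also have "\<dots> = (\<integral>X. indicator \<Omega>m X * exp (- ?B) \<partial>walk_law)"
    using \<Omega>m_sets by simp
  also have "\<dots> \<le> Z \<omega>"
    unfolding Z_eq_integral_weight
  proof (rule integral_mono)
    show "integrable walk_law (\<lambda>X. indicator \<Omega>m X * exp (- ?B))"
      using \<Omega>m_sets by (intro integrable_mult_left integrable_real_indicator)
        (simp_all add: W.emeasure_finite less_top[symmetric])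
    show "indicator \<Omega>m X * exp (- ?B) \<le> weight \<omega> X" for X
      unfolding weight_def using abs_energy_le[of \<omega> X] by (auto simp: indicator_def)
  qed (rule integrable_weight)
  finally show ?thesis .
qed

lemma gibbs_Delta_nonneg: "0 \<le> gibbs_Delta \<omega> n"
  unfolding gibbs_Delta_def using Z_pos[of \<omega>] weight_nonneg Delta_nonneg
  by (intro divide_nonneg_pos integral_nonneg) auto

lemma gibbs_Delta_le_1: "gibbs_Delta \<omega> n \<le> 1"
proof -
  have "(\<integral>X. weight \<omega> X * Delta X n \<partial>walk_law) \<le> Z \<omega>"
    unfolding Z_eq_integral_weight
    using integrable_weight_Delta integrable_weight weight_nonneg Delta_le_1
    by (intro integral_mono) (auto intro: mult_left_le)
  then show ?thesis
    unfolding gibbs_Delta_def using Z_pos[of \<omega>] by simp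
qed

lemma sum_gibbs_Delta: "(\<Sum>n=1..N. gibbs_Delta \<omega> n) = real m"
proof -
  have "(\<Sum>n=1..N. weight \<omega> X * Delta X n) = weight \<omega> X * real m" for X
    using calN_\<Omega>m by (cases "X \<in> \<Omega>m") (auto simp: weight_def calN_def sum_distrib_left[symmetric])
  then have "(\<Sum>n=1..N. (\<integral>X. weight \<omega> X * Delta X n \<partial>walk_law))
      = (\<integral>X. weight \<omega> X * real m \<partial>walk_law)"
    using Bochner_Integration.integral_sum[of "{1..N}" walk_law "\<lambda>n X. weight \<omega> X * Delta X n"]
      integrable_weight_Delta by simp
  also have "\<dots> = Z \<omega> * real m"
    by (simp add: Z_eq_integral_weight)
  finally have "(\<Sum>n=1..N. (\<integral>X. weight \<omega> X * Delta X n \<partial>walk_law)) = Z \<omega> * real m" .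
  then show ?thesis
    unfolding gibbs_Delta_def using Z_pos[of \<omega>] by (simp add: sum_divide_distrib[symmetric])
qed

lemma L2_set_gibbs_Delta: "L2_set (gibbs_Delta \<omega>) {1..N} \<le> sqrt (real m)"
proof -
  have "(\<Sum>n=1..N. (gibbs_Delta \<omega> n)\<^sup>2) \<le> (\<Sum>n=1..N. gibbs_Delta \<omega> n)"
    using gibbs_Delta_nonneg gibbs_Delta_le_1
    by (intro sum_mono) (simp add: power2_eq_square mult_left_le)
  then show ?thesis
    unfolding L2_set_def sum_gibbs_Delta by simp
qed

lemma ln_Z_tangent:
  "ln (Z y) - 2 * lam * (\<Sum>n=1..N. (x n - y n) * gibbs_Delta y n) \<le> ln (Z x)"
proof -
  let ?f = "\<lambda>X. energy x X - energy y X"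
  have "\<bar>?f X\<bar> \<le> 2 * lam * (\<Sum>n=1..N. \<bar>x n + h\<bar>) + 2 * lam * (\<Sum>n=1..N. \<bar>y n + h\<bar>)" for X
    using abs_energy_le[of x X] abs_energy_le[of y X]
      abs_triangle_ineq4[of "energy x X" "energy y X"] by linarith
  then have f_integrable: "integrable walk_law (\<lambda>X. weight y X * ?f X)"
    using borel_measurable_energy by (intro integrable_weight_mult) auto
  have exp_f: "weight y X * exp (?f X) = weight x X" for X
    unfolding weight_def by (simp add: exp_diff)
  have "(\<integral>X. weight y X * ?f X \<partial>walk_law)
      = (\<integral>X. - 2 * lam * (\<Sum>n=1..N. (x n - y n) * (weight y X * Delta X n)) \<partial>walk_law)"
    unfolding energy_diff by (simp add: sum_distrib_left algebra_simps)
  also have "\<dots> = - 2 * lam * (\<Sum>n=1..N. (x n - y n) * gibbs_Delta y n) * Z y"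
    using integrable_weight_Delta Z_pos[of y]
    by (simp add: integral_sum gibbs_Delta_def sum_distrib_right)
  finally have "(\<integral>X. weight y X * ?f X \<partial>walk_law) / Z y
      = - 2 * lam * (\<Sum>n=1..N. (x n - y n) * gibbs_Delta y n)"
    using Z_pos[of y] by simp
  then show ?thesis
    using ln_integral_exp_ge[of "weight y" walk_law ?f] weight_nonneg Z_pos[of y]
      integrable_weight f_integrable
    by (simp add: exp_f Z_eq_integral_weight)
qed

lemma free_energy_tangent:
  "free_energy lam h N y \<Omega>m + (\<Sum>n=1..N. (x n - y n) * (- 2 * lam * gibbs_Delta y n / real N))
     \<le> free_energy lam h N x \<Omega>m"
proof -
  have "(\<Sum>n=1..N. (x n - y n) * (- 2 * lam * gibbs_Delta y n / real N))
      = - 2 * lam / real N * (\<Sum>n=1..N. (x n - y n) * gibbs_Delta y n)"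
    unfolding sum_distrib_left by (intro sum.cong refl) (simp add: field_simps)
  moreover have "(ln (Z y) - 2 * lam * (\<Sum>n=1..N. (x n - y n) * gibbs_Delta y n)) / real N
      \<le> ln (Z x) / real N"
    using ln_Z_tangent N_pos by (intro divide_right_mono) auto
  ultimately show ?thesis
    unfolding free_energy_def by (simp add: diff_divide_distrib)
qed

lemma depends_only_on_free_energy: "depends_only_on N (\<lambda>\<omega>. free_energy lam h N \<omega> \<Omega>m)"
  unfolding depends_only_on_def free_energy_def Z_eq_integral_weight weight_def energy_def
  by (auto intro!: arg_cong[where f = "\<lambda>g. ln (integral\<^sup>L walk_law g) / real N"] sum.cong)

lemma convex_free_energy: "convex_fun (\<lambda>\<omega>. free_energy lam h N \<omega> \<Omega>m)"
  using free_energy_tangent by (rule convex_fun_if_tangent)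

lemma lipschitz_free_energy:
  "lipschitz_N N (2 * lam * sqrt (real m) / real N) (\<lambda>\<omega>. free_energy lam h N \<omega> \<Omega>m)"
proof (rule lipschitz_N_if_tangent[OF free_energy_tangent])
  fix y
  have "L2_set (\<lambda>n. - 2 * lam * gibbs_Delta y n / real N) {1..N}
      = L2_set (\<lambda>n. 2 * lam / real N * gibbs_Delta y n) {1..N}"
    unfolding L2_set_def by (simp add: power2_eq_square field_simps)
  also have "\<dots> = 2 * lam / real N * L2_set (gibbs_Delta y) {1..N}"
    using L2_set_right_distrib[of "2 * lam / real N" "gibbs_Delta y"] lam_nonneg by simp
  also have "\<dots> \<le> 2 * lam / real N * sqrt (real m)"
    using lam_nonneg by (intro mult_left_mono L2_set_gibbs_Delta) auto
  finally show "L2_set (\<lambda>n. - 2 * lam * gibbs_Delta y n / real N) {1..N}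
      \<le> 2 * lam * sqrt (real m) / real N" by simp
qed

end

theorem lemma2p1:
  fixes \<mu> :: "real measure" and C lam h u :: real and N m :: nat
    and \<Omega>m :: "(nat \<Rightarrow> int) set"
  assumes "prob_space \<mu>" and "sets \<mu> = sets borel"
    and "deviation_above_mean \<mu> C"
    and "lam \<ge> 0" and "h \<ge> 0"
    and "even N" and "N > 0"
    and "even m" and "m \<le> N"
    and "\<Omega>m \<in> sets walk_law" and "measure walk_law \<Omega>m > 0"
    and "\<forall>X\<in>\<Omega>m. calN N X = real m"
    and "integrable (disorder_law \<mu>) (\<lambda>\<omega>. free_energy lam h N \<omega> \<Omega>m)"
    and "u \<ge> 0"
  shows "measure (disorder_law \<mu>)
           {\<omega> \<in> space (disorder_law \<mu>).
              free_energy lam h N \<omega> \<Omega>m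
                - (\<integral>\<omega>'. free_energy lam h N \<omega>' \<Omega>m \<partial>disorder_law \<mu>) \<ge> u}
         \<le> (if lam = 0 \<or> m = 0 then (if u > 0 then 0 else C)
            else C * exp (- (u^2 * (real N)^2) / (4 * C * lam^2 * real m)))"
proof -
  interpret copolymer_on_paths lam h N m \<Omega>m
    using assms by unfold_locales auto
  define L where "L = 2 * lam * sqrt (real m) / real N"
  have L_eq_0: "L = 0 \<longleftrightarrow> lam = 0 \<or> m = 0"
    unfolding L_def using \<open>N > 0\<close> by simp
  have exponent: "- (u\<^sup>2) / (C * L\<^sup>2) = - (u^2 * (real N)^2) / (4 * C * lam^2 * real m)"
    unfolding L_def by (simp add: power_divide power_mult_distrib field_simps)
  have "L \<ge> 0"
    unfolding L_def using \<open>lam \<ge> 0\<close> by simp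
  from deviation_above_mean_lipschitz_nonneg[OF assms(1,3) depends_only_on_free_energy
      convex_free_energy assms(13) this lipschitz_free_energy[folded L_def] assms(14)]
  show ?thesis
    unfolding L_eq_0 exponent .
qed

end
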